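(* Let $S^{\max}$, $L$ and $\alpha$ be as in the context. For every $P\in L$ and every $\tau\in S^{\mathrm{pf}}\setminus S^{\max}$: if $\tau e\in\alpha(P)$ for every event $e\in E$ such that $\tau e\in S^{\mathrm{pf}}$, then $\tau\in\alpha(P)$.
   Context: Let $E$ be a set of events. A trace is a finite sequence $\sigma=\sigma_0\cdots\sigma_{n-1}$ ($n\ge 0$) or an infinite sequence $\sigma_0\sigma_1\cdots$ of events; $|\sigma|$ is its length ($\infty$ if infinite) and $\mathbb{T}$ is the set of all traces (including the empty trace). Write $\sigma\preceq\sigma'$ iff $|\sigma|\le|\sigma'|$ and $\sigma_i=\sigma'_i$ for all $0\le i<|\sigma|$ (prefix order). For a finite trace $\tau$ and an event $e$, $\tau e$ is the trace obtained by appending $e$. For $P\subseteq\mathbb{T}$, $\mathrm{pf}(P)=\{\sigma'\in\mathbb{T}\mid\exists\sigma\in P.\ \sigma'\preceq\sigma\}$. Fix $S^{\max}\subseteq\mathbb{T}$ (the maximal trace semantics) and let $S^{\mathrm{pf}}=\mathrm{pf}(S^{\max})$ (valid traces). For $P\subseteq\mathbb{T}$, $\alpha(P)=\{\sigma\in\mathrm{pf}(P)\mid\forall\sigma'\in S^{\max}.\ \sigma\preceq\sigma'\Rightarrow\sigma'\in P\}$. Let $L\subseteq\wp(S^{\max})$ with $S^{\max},\emptyset\in L$ be such that $(L,\subseteq)$ is a complete lattice. *)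

theory Defs
  imports Main
begin

text \<open>Traces: finite or infinite sequences of events. The event set E is the type 'e.\<close>
datatype 'e trace = Fin "'e list" | Inf "nat \<Rightarrow> 'e"

fun tprefix :: "'e trace \<Rightarrow> 'e trace \<Rightarrow> bool" where
  "tprefix (Fin xs) (Fin ys) = (length xs \<le> length ys \<and> (\<forall>i<length xs. xs ! i = ys ! i))"
| "tprefix (Fin xs) (Inf g) = (\<forall>i<length xs. xs ! i = g i)"
| "tprefix (Inf f) (Fin ys) = False"
| "tprefix (Inf f) (Inf g) = (\<forall>i. f i = g i)"

definition pf :: "'e trace set \<Rightarrow> 'e trace set" where
  "pf P = {\<sigma>'. \<exists>\<sigma>\<in>P. tprefix \<sigma>' \<sigma>}"

definition alpha :: "'e trace set \<Rightarrow> 'e trace set \<Rightarrow> 'e trace set" where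
  "alpha Smax P = {\<sigma> \<in> pf P. \<forall>\<sigma>'\<in>Smax. tprefix \<sigma> \<sigma>' \<longrightarrow> \<sigma>' \<in> P}"

definition complete_lattice_subset :: "'a set set \<Rightarrow> bool" where
  "complete_lattice_subset L \<longleftrightarrow>
     (\<forall>A\<subseteq>L. (\<exists>s\<in>L. (\<forall>X\<in>A. X \<subseteq> s) \<and> (\<forall>u\<in>L. (\<forall>X\<in>A. X \<subseteq> u) \<longrightarrow> s \<subseteq> u))
             \<and> (\<exists>i\<in>L. (\<forall>X\<in>A. i \<subseteq> X) \<and> (\<forall>l\<in>L. (\<forall>X\<in>A. l \<subseteq> X) \<longrightarrow> l \<subseteq> i)))"

end

theory Submission
  imports Defs
begin

(* Since \<tau> is valid but not maximal, every maximal trace extending \<tau> extends it strictly,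
   hence passes through a valid one-event extension \<tau>e; as \<tau>e \<in> \<alpha>(P), that maximal trace
   lies in P. Some maximal extension of \<tau> exists, so \<tau> \<in> pf(P) as well. *)

lemma proper_tprefix_extend:
  assumes "tprefix (Fin t) s" and "s \<noteq> Fin t"
  shows "\<exists>e. tprefix (Fin (t @ [e])) s"
proof (cases s)
  case (Fin ys)
  with assms have le: "length t \<le> length ys" and eq: "\<forall>i<length t. t ! i = ys ! i"
    by auto
  have "length t \<noteq> length ys"
  proof
    assume "length t = length ys"
    with eq have "t = ys" by (simp add: list_eq_iff_nth_eq)
    with assms Fin show False by simp
  qed
  with le have "length t < length ys" by simp
  with eq Fin show ?thesis
    by (intro exI[of _ "ys ! length t"]) (auto simp: nth_append less_Suc_eq)
next
  case (Inf g)
  with assms have "\<forall>i<length t. t ! i = g i" by auto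
  with Inf show ?thesis
    by (intro exI[of _ "g (length t)"]) (auto simp: nth_append less_Suc_eq)
qed

lemma alpha_if_successors_in_alpha:
  assumes valid: "Fin \<tau> \<in> pf Smax" and not_max: "Fin \<tau> \<notin> Smax"
    and succ: "\<forall>e. Fin (\<tau> @ [e]) \<in> pf Smax \<longrightarrow> Fin (\<tau> @ [e]) \<in> alpha Smax P"
  shows "Fin \<tau> \<in> alpha Smax P"
proof -
  have max_ext_in_P: "s \<in> P" if s: "s \<in> Smax" "tprefix (Fin \<tau>) s" for s
  proof -
    from s not_max have "s \<noteq> Fin \<tau>" by auto
    with s(2) obtain e where e: "tprefix (Fin (\<tau> @ [e])) s"
      using proper_tprefix_extend by blast
    with s(1) have "Fin (\<tau> @ [e]) \<in> pf Smax" unfolding pf_def by blast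
    with succ have "Fin (\<tau> @ [e]) \<in> alpha Smax P" by blast
    with e s(1) show ?thesis unfolding alpha_def by blast
  qed
  from valid obtain s where "s \<in> Smax" "tprefix (Fin \<tau>) s" unfolding pf_def by blast
  with max_ext_in_P have "Fin \<tau> \<in> pf P" unfolding pf_def by blast
  with max_ext_in_P show ?thesis unfolding alpha_def by blast
qed

theorem lemma6:
  fixes Smax :: "'e trace set" and L :: "'e trace set set"
    and P :: "'e trace set" and \<tau> :: "'e list"
  assumes L_sub: "L \<subseteq> Pow Smax"
    and Smax_L: "Smax \<in> L" and empty_L: "{} \<in> L"
    and L_cl: "complete_lattice_subset L"
    and P_L: "P \<in> L"
    and tau_valid: "Fin \<tau> \<in> pf Smax - Smax"
    and ext: "\<forall>e. Fin (\<tau> @ [e]) \<in> pf Smax \<longrightarrow> Fin (\<tau> @ [e]) \<in> alpha Smax P"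
  shows "Fin \<tau> \<in> alpha Smax P"
  using tau_valid ext by (intro alpha_if_successors_in_alpha) auto

end
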